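(* Let $\mathcal{C}$ be a clutter whose vertex set is a subset of $\{x_1,\dots,x_n\}$, $S=\mathbb{K}[x_1,\dots,x_n]$ with $\mathbb{K}$ a field, and let $e_1$ be an edge of $\mathcal{C}$ such that $\{e_1\}$ is a 2-collage for $\mathcal{C}$. Then $\operatorname{sreg}(S/I(\mathcal{C}))\le |e_1|-1$.
   Context: A clutter $\mathcal{C}$ consists of a finite vertex set and a collection $E(\mathcal{C})$ of subsets (edges), no edge containing another; vertices are identified with variables and $I(\mathcal{C})=(\prod_{x\in e}x : e\in E(\mathcal{C}))$ is the edge ideal. A 2-collage for $\mathcal{C}$ is a subset $C\subseteq E(\mathcal{C})$ such that for each $e\in E(\mathcal{C})$ there is a vertex $v$ with $e\setminus\{v\}$ contained in some edge of $C$. Stanley regularity: for a squarefree monomial ideal $I\subset S$, a squarefree Stanley decomposition of $S/I$ is a decomposition $S/I=\bigoplus_{i=1}^r u_i\mathbb{K}[Z_i]$ as $\mathbb{K}$-vector spaces, where $Z_i\subseteq\{x_1,\dots,x_n\}$, $u_i$ are (images of) squarefree monomials with $\operatorname{supp}(u_i)\subseteq Z_i$, and each $u_i\mathbb{K}[Z_i]$ is free over $\mathbb{K}[Z_i]$. Its Stanley regularity is $\max_i\deg(u_i)$, and $\operatorname{sreg}(S/I)$ is the minimum over all such decompositions. *)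

theory Defs
  imports Main
begin

text \<open>Variables x_1..x_n are identified with the naturals 1..n. A squarefree monomial is identified with its
support (a finite set of variables); its degree is the cardinality.\<close>

type_synonym monomial = "nat \<Rightarrow> nat"

definition supp :: "monomial \<Rightarrow> nat set" where
  "supp m = {x. m x \<noteq> 0}"

definition is_monomial :: "nat \<Rightarrow> monomial \<Rightarrow> bool" where
  "is_monomial n m \<longleftrightarrow> supp m \<subseteq> {1..n}"

definition clutter :: "nat set \<Rightarrow> nat set set \<Rightarrow> bool" where
  "clutter V E \<longleftrightarrow> finite V \<and> (\<forall>e\<in>E. e \<subseteq> V)
     \<and> (\<forall>e\<in>E. \<forall>f\<in>E. e \<subseteq> f \<longrightarrow> e = f)"

text \<open>A monomial lies in the edge ideal I(C) iff it is divisible by some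
edge monomial prod_{x in e} x, i.e. some edge is contained in its support.\<close>
definition in_edge_ideal :: "nat set set \<Rightarrow> monomial \<Rightarrow> bool" where
  "in_edge_ideal E m \<longleftrightarrow> (\<exists>e\<in>E. e \<subseteq> supp m)"

definition two_collage :: "nat set \<Rightarrow> nat set set \<Rightarrow> nat set set \<Rightarrow> bool" where
  "two_collage V E C \<longleftrightarrow> C \<subseteq> E \<and>
     (\<forall>e\<in>E. \<exists>v\<in>V. \<exists>f\<in>C. e - {v} \<subseteq> f)"

text \<open>Monomials of the subspace u K[Z], u the squarefree monomial with support U.\<close>
definition stanley_space :: "nat set \<Rightarrow> nat set \<Rightarrow> monomial set" where
  "stanley_space U Z =
     {(\<lambda>x. (if x \<in> U then 1 else 0) + m' x) | m'. supp m' \<subseteq> Z}"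

text \<open>Squarefree Stanley decomposition of S/I(C), given as a finite list of
pairs (U_i, Z_i). Since S/I has the K-basis of standard monomials (monomials
not in I) and each u_i K[Z_i] is spanned by monomials, the vector space
direct sum decomposition S/I = \<Oplus> u_i K[Z_i] amounts to: the monomial sets
are pairwise disjoint and their union is the set of standard monomials;
freeness of u_i K[Z_i] over K[Z_i] amounts to no monomial u_i*m (m in K[Z_i])
lying in I.\<close>
definition stanley_decomp :: "nat \<Rightarrow> nat set set \<Rightarrow> (nat set \<times> nat set) list \<Rightarrow> bool" where
  "stanley_decomp n E D \<longleftrightarrow>
     (\<forall>i<length D. fst (D!i) \<subseteq> snd (D!i) \<and> snd (D!i) \<subseteq> {1..n}) \<and>
     (\<forall>i<length D. \<forall>m\<in>stanley_space (fst (D!i)) (snd (D!i)). \<not> in_edge_ideal E m) \<and>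
     (\<forall>i<length D. \<forall>j<length D. i \<noteq> j \<longrightarrow>
        stanley_space (fst (D!i)) (snd (D!i)) \<inter> stanley_space (fst (D!j)) (snd (D!j)) = {}) \<and>
     (\<Union>i<length D. stanley_space (fst (D!i)) (snd (D!i)))
        = {m. is_monomial n m \<and> \<not> in_edge_ideal E m}"

definition stanley_reg_of :: "(nat set \<times> nat set) list \<Rightarrow> nat" where
  "stanley_reg_of D = Sup ((\<lambda>p. card (fst p)) ` set D)"

definition sreg :: "nat \<Rightarrow> nat set set \<Rightarrow> nat" where
  "sreg n E = Inf {stanley_reg_of D | D. stanley_decomp n E D}"

end

theory Submission
  imports Defs
begin

text \<open>If \<open>{e1}\<close> is a 2-collage, every edge other than \<open>e1\<close> has exactly one vertex
outside \<open>e1\<close>. Hence a squarefree monomial \<open>u\<close> with support a proper subset \<open>A\<close> of \<open>e1\<close>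
can be multiplied freely by the variables outside \<open>e1\<close> that do not complete an edge
together with \<open>A\<close>, and a monomial \<open>m\<close> outside \<open>I(C)\<close> lies in exactly one of these spaces,
namely the one with \<open>A = supp m \<inter> e1\<close>. This gives a Stanley decomposition whose
generators have degree \<open>|A| \<le> |e1| - 1\<close>.\<close>

lemma supp_indicator_plus:
  "supp (\<lambda>x. (if x \<in> U then 1 else 0) + m' x) = U \<union> supp m'"
  by (auto simp: supp_def)

lemma stanley_space_iff:
  assumes "U \<subseteq> Z"
  shows "m \<in> stanley_space U Z \<longleftrightarrow> U \<subseteq> supp m \<and> supp m \<subseteq> Z"
proof
  assume "m \<in> stanley_space U Z"
  then obtain m' where "m = (\<lambda>x. (if x \<in> U then 1 else 0) + m' x)" and "supp m' \<subseteq> Z"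
    unfolding stanley_space_def by blast
  then show "U \<subseteq> supp m \<and> supp m \<subseteq> Z" using assms by (simp add: supp_indicator_plus)
next
  assume m: "U \<subseteq> supp m \<and> supp m \<subseteq> Z"
  define m' where "m' = (\<lambda>x. m x - (if x \<in> U then 1 else 0))"
  have "m = (\<lambda>x. (if x \<in> U then 1 else 0) + m' x)"
    using m by (force simp: m'_def supp_def)
  moreover have "supp m' \<subseteq> Z" using m by (auto simp: m'_def supp_def)
  ultimately show "m \<in> stanley_space U Z" unfolding stanley_space_def by blast
qed

lemma stanley_decomp_of_fibres:
  assumes "distinct Us"
    and ZU: "\<And>U. U \<in> set Us \<Longrightarrow> U \<subseteq> Z U \<and> Z U \<subseteq> {1..n}"
    and fibre: "\<And>U m. U \<in> set Us \<Longrightarrow>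
       m \<in> stanley_space U (Z U) \<longleftrightarrow> is_monomial n m \<and> \<not> in_edge_ideal E m \<and> key m = U"
    and key: "\<And>m. is_monomial n m \<Longrightarrow> \<not> in_edge_ideal E m \<Longrightarrow> key m \<in> set Us"
  shows "stanley_decomp n E (map (\<lambda>U. (U, Z U)) Us)"
  unfolding stanley_decomp_def
proof (intro conjI allI impI)
  let ?D = "map (\<lambda>U. (U, Z U)) Us"
  fix i assume "i < length ?D"
  then have i: "Us ! i \<in> set Us" by simp
  show "fst (?D ! i) \<subseteq> snd (?D ! i)" "snd (?D ! i) \<subseteq> {1..n}"
    using ZU[OF i] \<open>i < length ?D\<close> by auto
  show "\<forall>m\<in>stanley_space (fst (?D ! i)) (snd (?D ! i)). \<not> in_edge_ideal E m"
    using fibre[OF i] \<open>i < length ?D\<close> by auto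
next
  let ?D = "map (\<lambda>U. (U, Z U)) Us"
  fix i j assume "i < length ?D" "j < length ?D" "i \<noteq> j"
  then have "Us ! i \<noteq> Us ! j" "Us ! i \<in> set Us" "Us ! j \<in> set Us"
    using \<open>distinct Us\<close> by (auto simp: nth_eq_iff_index_eq)
  then show "stanley_space (fst (?D ! i)) (snd (?D ! i))
      \<inter> stanley_space (fst (?D ! j)) (snd (?D ! j)) = {}"
    using fibre \<open>i < length ?D\<close> \<open>j < length ?D\<close> by auto
next
  have "(\<Union>i<length Us. stanley_space (Us ! i) (Z (Us ! i)))
      = (\<Union>U\<in>set Us. stanley_space U (Z U))"
    by (auto simp: in_set_conv_nth) (meson nth_mem)
  also have "\<dots> = {m. is_monomial n m \<and> \<not> in_edge_ideal E m}"
    using fibre key by blast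
  finally show "(\<Union>i<length (map (\<lambda>U. (U, Z U)) Us).
        stanley_space (fst (map (\<lambda>U. (U, Z U)) Us ! i)) (snd (map (\<lambda>U. (U, Z U)) Us ! i)))
      = {m. is_monomial n m \<and> \<not> in_edge_ideal E m}"
    by simp
qed

lemma stanley_reg_of_le:
  assumes "\<And>p. p \<in> set D \<Longrightarrow> card (fst p) \<le> k"
  shows "stanley_reg_of D \<le> k"
proof (cases "D = []")
  case True
  then show ?thesis by (simp add: stanley_reg_of_def Sup_nat_def)
next
  case False
  then show ?thesis
    unfolding stanley_reg_of_def using assms by (intro cSup_least) auto
qed

lemma sreg_le_stanley_reg_of:
  "stanley_decomp n E D \<Longrightarrow> sreg n E \<le> stanley_reg_of D"
  unfolding sreg_def by (rule cInf_lower) auto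

locale single_edge_collage =
  fixes n :: nat and E :: "nat set set" and e1 :: "nat set"
  assumes e1_edge: "e1 \<in> E"
    and e1_minimal: "\<And>e. e \<in> E \<Longrightarrow> e \<subseteq> e1 \<Longrightarrow> e = e1"
    and collage: "\<And>e. e \<in> E \<Longrightarrow> \<exists>v. e - {v} \<subseteq> e1"
begin

definition free_vars :: "nat set \<Rightarrow> nat set" where
  "free_vars A = A \<union> {w \<in> {1..n}. w \<notin> e1 \<and> (\<forall>e\<in>E. w \<in> e \<longrightarrow> \<not> e - {w} \<subseteq> A)}"

lemma subset_free_vars: "A \<subseteq> free_vars A"
  unfolding free_vars_def by blast

lemma free_vars_inter_e1: "A \<subseteq> e1 \<Longrightarrow> free_vars A \<inter> e1 = A"
  unfolding free_vars_def by blast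

lemma free_vars_subset: "A \<subseteq> {1..n} \<Longrightarrow> free_vars A \<subseteq> {1..n}"
  unfolding free_vars_def by blast

lemma not_in_edge_ideal_iff:
  assumes "supp m \<subseteq> {1..n}"
  shows "\<not> in_edge_ideal E m \<longleftrightarrow> \<not> e1 \<subseteq> supp m \<and> supp m \<subseteq> free_vars (supp m \<inter> e1)"
proof
  assume std: "\<not> in_edge_ideal E m"
  then have "\<not> e1 \<subseteq> supp m"
    using e1_edge unfolding in_edge_ideal_def by blast
  moreover have "supp m \<subseteq> free_vars (supp m \<inter> e1)"
  proof
    fix x assume x: "x \<in> supp m"
    have "\<not> e - {x} \<subseteq> supp m \<inter> e1" if "e \<in> E" "x \<in> e" for e
      using std that x unfolding in_edge_ideal_def by blast
    then show "x \<in> free_vars (supp m \<inter> e1)"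
      using x assms unfolding free_vars_def by blast
  qed
  ultimately show "\<not> e1 \<subseteq> supp m \<and> supp m \<subseteq> free_vars (supp m \<inter> e1)" ..
next
  assume m: "\<not> e1 \<subseteq> supp m \<and> supp m \<subseteq> free_vars (supp m \<inter> e1)"
  show "\<not> in_edge_ideal E m"
  proof
    assume "in_edge_ideal E m"
    then obtain e where e: "e \<in> E" "e \<subseteq> supp m" unfolding in_edge_ideal_def by blast
    show False
    proof (cases "e \<subseteq> e1")
      case True
      then show False using e1_minimal e m by blast
    next
      case False
      obtain v where v: "e - {v} \<subseteq> e1" using collage[OF \<open>e \<in> E\<close>] by blast
      with False have "v \<in> e" "v \<notin> e1" by blast+
      \<comment> \<open>\<open>v\<close> is then a variable of \<open>m\<close> outside \<open>e1\<close> completing the edge \<open>e\<close>, so it is not free.\<close>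
      then show False using m e v unfolding free_vars_def by blast
    qed
  qed
qed

lemma stanley_space_free_vars_iff:
  assumes "A \<subset> e1" "e1 \<subseteq> {1..n}"
  shows "m \<in> stanley_space A (free_vars A)
    \<longleftrightarrow> is_monomial n m \<and> \<not> in_edge_ideal E m \<and> supp m \<inter> e1 = A"
proof -
  have "m \<in> stanley_space A (free_vars A) \<longleftrightarrow> A \<subseteq> supp m \<and> supp m \<subseteq> free_vars A"
    by (rule stanley_space_iff[OF subset_free_vars])
  also have "\<dots> \<longleftrightarrow> supp m \<subseteq> {1..n} \<and> supp m \<inter> e1 = A \<and> supp m \<subseteq> free_vars A"
    using assms free_vars_inter_e1[of A] free_vars_subset[of A] by blast
  also have "\<dots> \<longleftrightarrow> is_monomial n m \<and> \<not> in_edge_ideal E m \<and> supp m \<inter> e1 = A"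
    using assms not_in_edge_ideal_iff unfolding is_monomial_def by blast
  finally show ?thesis .
qed

lemma sreg_le:
  assumes "e1 \<subseteq> {1..n}"
  shows "sreg n E \<le> card e1 - 1"
proof -
  have "finite e1" using assms finite_subset by blast
  then have "finite {A. A \<subset> e1}"
    by (rule rev_finite_subset[OF finite_Collect_subsets]) auto
  then obtain Us where "distinct Us" and Us: "set Us = {A. A \<subset> e1}"
    using finite_distinct_list by blast
  have "stanley_decomp n E (map (\<lambda>A. (A, free_vars A)) Us)"
  proof (rule stanley_decomp_of_fibres[where key = "\<lambda>m. supp m \<inter> e1"])
    fix A assume "A \<in> set Us"
    then have "A \<subset> e1" by (simp add: Us)
    then have "A \<subseteq> {1..n}" using assms by blast
    then show "A \<subseteq> free_vars A \<and> free_vars A \<subseteq> {1..n}"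
      using subset_free_vars free_vars_subset by blast
    show "m \<in> stanley_space A (free_vars A)
        \<longleftrightarrow> is_monomial n m \<and> \<not> in_edge_ideal E m \<and> supp m \<inter> e1 = A" for m
      using \<open>A \<subset> e1\<close> assms by (rule stanley_space_free_vars_iff)
  next
    fix m assume "is_monomial n m" "\<not> in_edge_ideal E m"
    then have "\<not> e1 \<subseteq> supp m"
      using not_in_edge_ideal_iff unfolding is_monomial_def by blast
    then show "supp m \<inter> e1 \<in> set Us" by (auto simp: Us)
  qed fact
  moreover have "stanley_reg_of (map (\<lambda>A. (A, free_vars A)) Us) \<le> card e1 - 1"
  proof (rule stanley_reg_of_le)
    fix p assume "p \<in> set (map (\<lambda>A. (A, free_vars A)) Us)"
    then have "fst p \<subset> e1" by (auto simp: Us)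
    then have "card (fst p) < card e1" by (rule psubset_card_mono[OF \<open>finite e1\<close>])
    then show "card (fst p) \<le> card e1 - 1" by linarith
  qed
  ultimately show ?thesis
    using sreg_le_stanley_reg_of order_trans by blast
qed

end

theorem lemma5p15:
  fixes n :: nat and V :: "nat set" and E :: "nat set set" and e1 :: "nat set"
  assumes "V \<subseteq> {1..n}"
    and "clutter V E"
    and "e1 \<in> E"
    and "two_collage V E {e1}"
  shows "sreg n E \<le> card e1 - 1"
proof -
  interpret single_edge_collage n E e1
  proof
    show "e1 \<in> E" by fact
    show "\<And>e. e \<in> E \<Longrightarrow> e \<subseteq> e1 \<Longrightarrow> e = e1"
      using assms(2,3) unfolding clutter_def by blast
    show "\<And>e. e \<in> E \<Longrightarrow> \<exists>v. e - {v} \<subseteq> e1"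
      using assms(4) unfolding two_collage_def by blast
  qed
  have "e1 \<subseteq> {1..n}"
    using assms(1-3) unfolding clutter_def by blast
  then show ?thesis by (rule sreg_le)
qed

end
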